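(* Let $n$ be a positive integer and $d\in\Delta(n)$. Write $d=(d_1,\dots,d_L)$ with $d_L>0$ its last nonzero entry and let $q=\max_k d_k$, so that $d=(1,2,\dots,q,d_{q+1},\dots,d_L)$ with $d_{q+1}\le q$. Set $b_i=d_i-d_{i+1}$ for $q\le i<L$ and $b_L=d_L$. Then for every integer $k$ with $q<k\le L$, \[\big|\,[\,d\,]_k\,\big|=\big|\,[\,d\,]\cap\mathcal{P}(n,k)\,\big|=\binom{b_{k-1}+b_k}{b_{k-1}+1}\prod_{i=q}^{k-2}\binom{b_i+b_{i+1}+1}{b_i+1}\prod_{i=k}^{L-1}\binom{b_i+b_{i+1}}{b_i},\] where empty products equal $1$.
   Context: A partition of a positive integer $n$ is a finite non-increasing sequence $\alpha=(\alpha_1,\dots,\alpha_l)$ of positive integers with sum $n$; $\mathcal{P}(n)$ is the set of partitions of $n$, $\alpha_i=0$ for $i>l$, and $\mathcal{P}(n,k)$ is the set of partitions of $n$ with exactly $k$ nonzero parts. The diagonal sequence is $\delta(\alpha)=(d_k)_{k\ge1}$ with $d_k=|\{i:1\le i\le k,\ \alpha_i+i-1\ge k\}|$, trailing zeros omitted; $\Delta(n)=\{\delta(\alpha):\alpha\in\mathcal{P}(n)\}$, $[\,d\,]=\{\alpha\in\mathcal{P}(n):\delta(\alpha)=d\}$, and $[\,d\,]_k=[\,d\,]\cap\mathcal{P}(n,k)$. *)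

theory Defs
  imports Main
begin

definition partitions :: "nat \<Rightarrow> nat list set" where
  "partitions n = {\<alpha>. sorted_wrt (\<ge>) \<alpha> \<and> 0 \<notin> set \<alpha> \<and> sum_list \<alpha> = n}"

definition partitions_k :: "nat \<Rightarrow> nat \<Rightarrow> nat list set" where
  "partitions_k n k = {\<alpha> \<in> partitions n. length \<alpha> = k}"

definition part :: "nat list \<Rightarrow> nat \<Rightarrow> nat" where
  "part \<alpha> i = (if 1 \<le> i \<and> i \<le> length \<alpha> then \<alpha> ! (i - 1) else 0)"

text \<open>Diagonal sequence, 1-indexed (value at index 0 is 0); trailing zeros are
  represented implicitly by the function being 0 there.\<close>
definition diag :: "nat list \<Rightarrow> nat \<Rightarrow> nat" where
  "diag \<alpha> k = card {i. 1 \<le> i \<and> i \<le> k \<and> part \<alpha> i + i - 1 \<ge> k}"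

definition Delta :: "nat \<Rightarrow> (nat \<Rightarrow> nat) set" where
  "Delta n = diag ` partitions n"

definition diag_class :: "nat \<Rightarrow> (nat \<Rightarrow> nat) \<Rightarrow> nat list set" where
  "diag_class n d = {\<alpha> \<in> partitions n. diag \<alpha> = d}"

end

(* Encode a partition alpha with k parts by its shifted parts alpha_i + i (rows numbered
   from 1). The parts are non-increasing iff this list rises by at most one from entry to
   entry, they are positive iff moreover its last entry exceeds k, and the number of its
   entries above x is d_x + (k - x). Hence [d]_k is in bijection with the slowly rising
   arrangements, ending above k, of a single multiset determined by d and k, in which the
   value i + 1 occurs b_i + 1 times for q <= i < k and b_i times for k <= i <= L.
   These are counted by deleting all copies of the largest value M: every copy sits at the
   front or right after an entry M - 1 or M, so by stars and bars the copies can be put back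
   in binomially many ways, and the formula follows by peeling off the values one by one. *)

theory Submission
  imports Defs "HOL-Combinatorics.Multiset_Permutations"
begin

section \<open>Arrangements rising by at most one\<close>

abbreviation slow_rise :: "nat list \<Rightarrow> bool" where
  "slow_rise \<equiv> successively (\<lambda>x y. y \<le> Suc x)"

lemma slow_rise_removeAll_iff:
  assumes "\<forall>x\<in>set xs. x \<le> M"
  shows "slow_rise xs \<longleftrightarrow>
    successively (\<lambda>x y. y = M \<longrightarrow> y \<le> Suc x) xs \<and> slow_rise (removeAll M xs)"
  using assms
proof (induction xs)
  case (Cons x xs)
  then have IH: "slow_rise xs \<longleftrightarrow>
      successively (\<lambda>x y. y = M \<longrightarrow> y \<le> Suc x) xs \<and> slow_rise (removeAll M xs)"
    by simp
  have hd_le: "hd ys \<le> M" if "ys \<noteq> []" "set ys \<subseteq> set xs" for ys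
    using Cons.prems hd_in_set[OF that(1)] that(2) by auto
  show ?case
  proof (cases "x = M")
    case True
    with IH hd_le[of xs] show ?thesis by (auto simp: successively_Cons intro: le_SucI)
  next
    case False
    have "removeAll M xs \<noteq> [] \<and> hd (removeAll M xs) = hd xs" if "xs \<noteq> []" "hd xs \<noteq> M"
      using that by (cases xs) auto
    with False IH hd_le[of "removeAll M xs"] show ?thesis
      by (cases "xs = []"; cases "hd xs = M") (auto simp: successively_Cons)
  qed
qed simp

text \<open>Here \<open>p\<close> stands for the entry preceding the list.\<close>
definition insertions :: "nat \<Rightarrow> nat \<Rightarrow> nat list \<Rightarrow> nat \<Rightarrow> nat list set" where
  "insertions M p ys m = {xs. removeAll M xs = ys \<and> count_list xs M = m \<and>
     successively (\<lambda>x y. y = M \<longrightarrow> y \<le> Suc x) (p # xs)}"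

lemma mset_eq_mset_removeAll_plus_replicate:
  "mset xs = mset (removeAll M xs) + replicate_mset (count_list xs M) M"
  by (induction xs) auto

lemma finite_insertions: "finite (insertions M p ys m)"
proof (rule finite_subset)
  show "insertions M p ys m \<subseteq> {xs. mset xs = mset (ys @ replicate m M)}"
  proof
    fix xs assume "xs \<in> insertions M p ys m"
    then show "xs \<in> {xs. mset xs = mset (ys @ replicate m M)}"
      using mset_eq_mset_removeAll_plus_replicate[of xs M] by (simp add: insertions_def)
  qed
qed (rule mset_eq_finite)

lemma removeAll_eq_Nil_and_count_iff:
  "removeAll M xs = [] \<and> count_list xs M = m \<longleftrightarrow> xs = replicate m M"
proof (induction xs arbitrary: m)
  case (Cons x xs)
  then show ?case
    by (cases m) auto
qed auto

lemma insertions_Nil: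
  "insertions M p [] m = (if m = 0 \<or> M \<le> Suc p then {replicate m M} else {})"
proof (rule set_eqI)
  fix xs
  have "successively (\<lambda>x y. y = M \<longrightarrow> y \<le> Suc x) (p # replicate m M) \<longleftrightarrow> m = 0 \<or> M \<le> Suc p"
  proof (cases m)
    case (Suc m')
    have "successively (\<lambda>x y. y = M \<longrightarrow> y \<le> Suc x) (M # replicate m' M)"
      by (induction m') auto
    with Suc show ?thesis
      by simp
  qed simp
  with removeAll_eq_Nil_and_count_iff[of M xs m]
  show "xs \<in> insertions M p [] m \<longleftrightarrow> xs \<in> (if m = 0 \<or> M \<le> Suc p then {replicate m M} else {})"
    by (auto simp: insertions_def)
qed

lemma insertions_Cons:
  assumes "y \<noteq> M"
  shows "insertions M p (y # ys) m =
    (if M \<le> Suc p \<and> 0 < m then Cons M ` insertions M M (y # ys) (m - 1) else {})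
    \<union> Cons y ` insertions M y ys m"
  (is "?L = ?R")
proof
  show "?L \<subseteq> ?R"
  proof
    fix xs assume "xs \<in> ?L"
    then obtain x xs' where xs: "xs = x # xs'"
      unfolding insertions_def by (cases xs) auto
    with \<open>xs \<in> ?L\<close> assms show "xs \<in> ?R"
      unfolding insertions_def by (cases "x = M") auto
  qed
  have "Cons y ` insertions M y ys m \<subseteq> ?L"
    using assms by (auto simp: insertions_def)
  moreover have "Cons M ` insertions M M (y # ys) (m - 1) \<subseteq> ?L" if "M \<le> Suc p" "0 < m"
    using that by (auto simp: insertions_def)
  ultimately show "?R \<subseteq> ?L"
    by auto
qed

lemma card_insertions_Cons:
  assumes "y \<noteq> M"
  shows "card (insertions M p (y # ys) m) =
    (if M \<le> Suc p \<and> 0 < m then card (insertions M M (y # ys) (m - 1)) else 0) +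
    card (insertions M y ys m)"
proof -
  have "Cons M ` insertions M M (y # ys) (m - 1) \<inter> Cons y ` insertions M y ys m = {}"
    using assms by auto
  then show ?thesis
    using insertions_Cons[OF assms, of p ys m]
    by (simp add: card_Un_disjoint card_image finite_insertions)
qed

text \<open>Stars and bars: the copies of \<open>M\<close> are distributed over the admissible slots, namely
  the front (if \<open>M \<le> Suc p\<close>) and the positions right after an entry \<open>M - 1\<close>.\<close>
lemma card_insertions:
  assumes "\<forall>y\<in>set ys. y < M"
  shows "card (insertions M p ys m) =
    (m + (of_bool (M \<le> Suc p) + count_list ys (M - 1)) - 1) choose m"
  using assms
proof (induction ys arbitrary: p m)
  case Nil
  then show ?case
    by (cases m) (auto simp: insertions_Nil)
next
  case (Cons y ys)
  then have "y \<noteq> M" by auto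
  define s where "s = count_list (y # ys) (M - 1)"
  have tail: "card (insertions M y ys m') = (m' + s - 1) choose m'" for m'
  proof -
    have "of_bool (M \<le> Suc y) + count_list ys (M - 1) = s"
      unfolding s_def using Cons.prems by auto
    with Cons.IH[of y m'] Cons.prems show ?thesis by simp
  qed
  have slots: "of_bool (M \<le> Suc p) + count_list (y # ys) (M - 1) = of_bool (M \<le> Suc p) + s" for p
    by (simp add: s_def)
  show ?case
    unfolding slots
  proof (induction m arbitrary: p)
    case 0
    show ?case
      using card_insertions_Cons[OF \<open>y \<noteq> M\<close>, of p ys 0] tail[of 0] by simp
  next
    case (Suc m)
    have "card (insertions M p (y # ys) (Suc m)) =
        of_bool (M \<le> Suc p) * (m + s choose m) + (m + s choose Suc m)"
      using card_insertions_Cons[OF \<open>y \<noteq> M\<close>, of p ys "Suc m"] Suc.IH[of M] tail[of "Suc m"]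
      by simp
    then show ?case
      by (cases "M \<le> Suc p") simp_all
  qed
qed

definition slow_arrangements :: "nat multiset \<Rightarrow> nat \<Rightarrow> nat list set" where
  "slow_arrangements C T =
     {xs \<in> permutations_of_multiset C. slow_rise xs \<and> (xs \<noteq> [] \<longrightarrow> T \<le> last xs)}"

lemma finite_slow_arrangements: "finite (slow_arrangements C T)"
  unfolding slow_arrangements_def by simp

lemma slow_arrangements_empty: "slow_arrangements {#} T = {[]}"
  unfolding slow_arrangements_def by auto

lemma last_removeAll_if_last_neq:
  "xs \<noteq> [] \<Longrightarrow> last xs \<noteq> M \<Longrightarrow> removeAll M xs \<noteq> [] \<and> last (removeAll M xs) = last xs"
  by (induction xs rule: rev_induct) auto

lemma last_removeAll_if_last_eq:
  assumes "successively (\<lambda>x y. y = M \<longrightarrow> y \<le> Suc x) xs" "removeAll M xs \<noteq> []" "last xs = M"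
  shows "M \<le> Suc (last (removeAll M xs))"
  using assms
proof (induction xs rule: rev_induct)
  case (snoc x xs)
  then have "xs \<noteq> []" "M \<le> Suc (last xs)" "successively (\<lambda>x y. y = M \<longrightarrow> y \<le> Suc x) xs"
    by (auto simp: successively_append_iff)
  with snoc.IH snoc.prems last_removeAll_if_last_neq[of xs M] show ?case
    by (cases "last xs = M") auto
qed simp

lemma mset_eq_iff_removeAll:
  "mset xs = C \<longleftrightarrow>
     mset (removeAll M xs) = filter_mset ((\<noteq>) M) C \<and> count_list xs M = count C M"
proof -
  have "C = filter_mset ((\<noteq>) M) C + replicate_mset (count C M) M"
    by (rule multiset_eqI) auto
  then show ?thesis
    using mset_eq_mset_removeAll_plus_replicate[of xs M]
    by (auto simp: mset_removeAll_eq count_mset[symmetric])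
qed

lemma slow_arrangements_iff_insertions:
  assumes "T < M" "set_mset C \<subseteq> {..M}"
  shows "xs \<in> slow_arrangements C T \<longleftrightarrow>
    removeAll M xs \<in> slow_arrangements (filter_mset ((\<noteq>) M) C) T \<and>
    xs \<in> insertions M M (removeAll M xs) (count C M)"
proof (cases "mset xs = C")
  case True
  let ?ok = "successively (\<lambda>x y. y = M \<longrightarrow> y \<le> Suc x)"
  have "\<forall>x\<in>set xs. x \<le> M"
    using True assms(2) by auto
  then have rise: "slow_rise xs \<longleftrightarrow> ?ok xs \<and> slow_rise (removeAll M xs)"
    by (rule slow_rise_removeAll_iff)
  have last: "(xs \<noteq> [] \<longrightarrow> T \<le> last xs) \<longleftrightarrow>
      (removeAll M xs \<noteq> [] \<longrightarrow> T \<le> last (removeAll M xs))" if "?ok xs"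
    using last_removeAll_if_last_eq[OF that] last_removeAll_if_last_neq[of xs M] assms(1)
    by (cases "xs = []"; cases "last xs = M") auto
  have "?ok (M # xs) \<longleftrightarrow> ?ok xs"
    by (cases xs) auto
  with True rise last show ?thesis
    unfolding slow_arrangements_def insertions_def permutations_of_multiset_def
    using mset_eq_iff_removeAll[of xs C M] by (auto simp: count_mset)
next
  case False
  then show ?thesis
    unfolding slow_arrangements_def insertions_def permutations_of_multiset_def
    using mset_eq_iff_removeAll[of xs C M] by (auto simp: count_mset)
qed

lemma card_slow_arrangements_remove_max:
  assumes "T < M" "set_mset C \<subseteq> {..M}"
  shows "card (slow_arrangements C T) =
    (count C M + count C (M - 1) choose count C M) *
    card (slow_arrangements (filter_mset ((\<noteq>) M) C) T)"
proof -
  define C' where "C' = filter_mset ((\<noteq>) M) C"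
  define m where "m = count C M"
  have split: "slow_arrangements C T = (\<Union>ys\<in>slow_arrangements C' T. insertions M M ys m)"
    using slow_arrangements_iff_insertions[OF assms] unfolding C'_def m_def insertions_def
    by blast
  have card_fibre: "card (insertions M M ys m) = m + count C (M - 1) choose m"
    if "ys \<in> slow_arrangements C' T" for ys
  proof -
    have "mset ys = C'"
      using that by (simp add: slow_arrangements_def permutations_of_multiset_def)
    then have "set ys = set_mset C'"
      by (metis set_mset_mset)
    then have "\<forall>y\<in>set ys. y < M"
      using assms(2) unfolding C'_def by fastforce
    moreover have "count_list ys (M - 1) = count C (M - 1)"
      using \<open>mset ys = C'\<close> assms(1) unfolding C'_def
      by (metis (mono_tags) count_filter_mset count_mset diff_less less_nat_zero_code
          nat_neq_iff zero_less_one)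
    ultimately show ?thesis
      by (simp add: card_insertions)
  qed
  have "card (slow_arrangements C T) = (\<Sum>ys\<in>slow_arrangements C' T. card (insertions M M ys m))"
    unfolding split
    by (rule card_UN_disjoint)
      (simp_all add: finite_slow_arrangements finite_insertions, auto simp: insertions_def)
  also have "\<dots> = card (slow_arrangements C' T) * (m + count C (M - 1) choose m)"
    using card_fibre by simp
  finally show ?thesis
    unfolding C'_def m_def by (simp add: mult.commute)
qed

lemma slow_arrangements_max:
  assumes "set_mset C \<subseteq> {..M}" "M \<in># C"
  shows "slow_arrangements C M = (\<lambda>xs. xs @ [M]) ` slow_arrangements (C - {#M#}) (M - 1)"
proof -
  have snoc: "xs @ [M] \<in> slow_arrangements C M \<longleftrightarrow> xs \<in> slow_arrangements (C - {#M#}) (M - 1)"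
    for xs
  proof -
    have "mset (xs @ [M]) = C \<longleftrightarrow> mset xs = C - {#M#}"
      using assms(2) by (auto simp: insert_DiffM)
    then show ?thesis
      unfolding slow_arrangements_def permutations_of_multiset_def
      by (auto simp: successively_append_iff)
  qed
  have butlast: "xs = butlast xs @ [M]" if "xs \<in> slow_arrangements C M" for xs
  proof -
    have "mset xs = C" and last_ge: "xs \<noteq> [] \<longrightarrow> M \<le> last xs"
      using that by (auto simp: slow_arrangements_def permutations_of_multiset_def)
    moreover from this have "xs \<noteq> []"
      using assms(2) by auto
    ultimately have "last xs \<in># C"
      by auto
    with assms(1) last_ge \<open>xs \<noteq> []\<close> have "last xs = M"
      by fastforce
    with \<open>xs \<noteq> []\<close> show ?thesis
      by (metis append_butlast_last_id)
  qed
  show ?thesis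
  proof (intro equalityI subsetI)
    fix xs assume "xs \<in> slow_arrangements C M"
    with butlast snoc show "xs \<in> (\<lambda>xs. xs @ [M]) ` slow_arrangements (C - {#M#}) (M - 1)"
      by (metis image_eqI)
  qed (auto simp: snoc)
qed

lemma card_slow_arrangements_max:
  assumes "set_mset C \<subseteq> {..M}" "M \<in># C" "0 < M"
  shows "card (slow_arrangements C M) =
    (count C M - 1 + count C (M - 1) choose (count C M - 1)) *
    card (slow_arrangements (filter_mset ((\<noteq>) M) C) (M - 1))"
proof -
  have "card (slow_arrangements C M) = card (slow_arrangements (C - {#M#}) (M - 1))"
    using slow_arrangements_max[OF assms(1,2)] by (simp add: card_image inj_on_def)
  also have "\<dots> = (count C M - 1 + count C (M - 1) choose (count C M - 1)) *
      card (slow_arrangements (filter_mset ((\<noteq>) M) (C - {#M#})) (M - 1))"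
  proof -
    have "set_mset (C - {#M#}) \<subseteq> {..M}"
      using assms(1) by (meson in_diffD subset_iff)
    moreover have "count (C - {#M#}) (M - 1) = count C (M - 1)"
    proof -
      have "M \<noteq> M - 1"
        using assms(3) by linarith
      then show ?thesis
        by simp
    qed
    ultimately show ?thesis
      using card_slow_arrangements_remove_max[of "M - 1" M "C - {#M#}"] assms(3) by simp
  qed
  also have "filter_mset ((\<noteq>) M) (C - {#M#}) = filter_mset ((\<noteq>) M) C"
    by (rule multiset_eqI) auto
  finally show ?thesis .
qed

lemma slow_arrangements_eq_empty:
  assumes "set_mset C \<subseteq> {..<T}" "C \<noteq> {#}"
  shows "slow_arrangements C T = {}"
proof -
  have "\<not> T \<le> last xs" if "mset xs = C" for xs
    using that assms by (metis last_in_set leD lessThan_iff mset_zero_iff set_mset_mset subsetD)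
  then show ?thesis
    using assms(2) by (auto simp: slow_arrangements_def permutations_of_multiset_def)
qed

lemma card_slow_arrangements_peel:
  assumes "T \<le> M" "set_mset C \<subseteq> {..M}"
  shows "card (slow_arrangements C T) =
    (\<Prod>v\<in>{Suc T..M}. count C v + count C (v - 1) choose count C v) *
    card (slow_arrangements (filter_mset (\<lambda>v. v \<le> T) C) T)"
  using assms
proof (induction M arbitrary: C rule: dec_induct)
  case base
  then have "filter_mset (\<lambda>v. v \<le> T) C = C"
    by (auto simp: filter_mset_eq_conv)
  then show ?case
    by simp
next
  case (step M)
  let ?C' = "filter_mset ((\<noteq>) (Suc M)) C"
  have "set_mset ?C' \<subseteq> {..M}"
    using step.prems by auto
  moreover have "filter_mset (\<lambda>v. v \<le> T) ?C' = filter_mset (\<lambda>v. v \<le> T) C"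
    using step.hyps by (auto intro: multiset_eqI)
  moreover have "(\<Prod>v\<in>{Suc T..M}. count ?C' v + count ?C' (v - 1) choose count ?C' v) =
      (\<Prod>v\<in>{Suc T..M}. count C v + count C (v - 1) choose count C v)"
    by (rule prod.cong) auto
  ultimately have "card (slow_arrangements ?C' T) =
      (\<Prod>v\<in>{Suc T..M}. count C v + count C (v - 1) choose count C v) *
      card (slow_arrangements (filter_mset (\<lambda>v. v \<le> T) C) T)"
    using step.IH[of ?C'] by simp
  moreover have "Suc T \<le> Suc M"
    using step.hyps by simp
  ultimately show ?case
    using card_slow_arrangements_remove_max[of T "Suc M" C] step.hyps step.prems
    by (simp add: prod.cl_ivl_Suc)
qed

lemma card_slow_arrangements_interval:
  assumes "set_mset C = {a..M}" "0 < a"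
  shows "card (slow_arrangements C M) =
    (\<Prod>v\<in>{a..M}. count C v - 1 + count C (v - 1) choose (count C v - 1))"
  using assms(1)
proof (induction M arbitrary: C)
  case 0
  then show ?case
    using assms(2) by (simp add: slow_arrangements_empty)
next
  case (Suc M)
  show ?case
  proof (cases "a \<le> Suc M")
    case False
    with Suc.prems show ?thesis
      by (simp add: slow_arrangements_empty)
  next
    case True
    let ?C' = "filter_mset ((\<noteq>) (Suc M)) C"
    have "set_mset ?C' = {a..M}"
      using Suc.prems by auto
    then have "card (slow_arrangements ?C' M) =
        (\<Prod>v\<in>{a..M}. count ?C' v - 1 + count ?C' (v - 1) choose (count ?C' v - 1))"
      by (rule Suc.IH)
    also have "\<dots> = (\<Prod>v\<in>{a..M}. count C v - 1 + count C (v - 1) choose (count C v - 1))"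
      by (rule prod.cong) auto
    moreover have "card (slow_arrangements C (Suc M)) =
        (count C (Suc M) - 1 + count C M choose (count C (Suc M) - 1)) *
        card (slow_arrangements ?C' M)"
      using card_slow_arrangements_max[of C "Suc M"] Suc.prems True by simp
    ultimately show ?thesis
      using True by (simp add: prod.cl_ivl_Suc)
  qed
qed

lemma choose_add_swap: "m + n choose m = m + n choose n"
  using binomial_symmetric[of m "m + n"] by simp

lemma prod_shift_two:
  assumes "2 \<le> n"
  shows "(\<Prod>v\<in>{Suc (Suc m)..n}. f v) = (\<Prod>i\<in>{m..n - 2}. f (i + 2))"
proof -
  have "(n - 2) + 2 = n"
    using assms by simp
  then have "{Suc (Suc m)..n} = {m + 2..(n - 2) + 2}"
    by simp
  then show ?thesis
    by (simp only: prod.shift_bounds_cl_nat_ivl)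
qed

lemma card_slow_arrangements_top_levels:
  fixes b :: "nat \<Rightarrow> nat"
  assumes "set_mset C = {Suc q..Suc k}" "q < k" "2 \<le> k"
    and mid: "\<And>i. q \<le> i \<Longrightarrow> i < k \<Longrightarrow> count C (Suc i) = b i + 1"
    and top: "count C (Suc k) = b k"
  shows "card (slow_arrangements C (Suc k)) =
    (b (k - 1) + b k choose (b (k - 1) + 1)) *
    (\<Prod>i\<in>{q..k - 2}. b i + b (i + 1) + 1 choose (b i + 1))"
proof -
  define h where "h v = count C v - 1 + count C (v - 1) choose (count C v - 1)" for v
  have "0 < b k"
    using assms(1,2) top count_greater_zero_iff[of C "Suc k"] by simp
  have "q \<notin># C"
    using assms(1) by simp
  then have "h (Suc q) = 1"
    using assms(2) mid[of q] by (simp add: h_def not_in_iff)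
  moreover have "h (Suc k) = b (k - 1) + b k choose (b (k - 1) + 1)"
    using mid[of "k - 1"] assms(2) top \<open>0 < b k\<close> choose_add_swap[of "b k - 1" "b (k - 1) + 1"]
    by (simp add: h_def add.commute)
  moreover have "(\<Prod>v\<in>{Suc (Suc q)..k}. h v) =
      (\<Prod>i\<in>{q..k - 2}. b i + b (i + 1) + 1 choose (b i + 1))"
  proof -
    have "h (i + 2) = b i + b (i + 1) + 1 choose (b i + 1)" if "i \<in> {q..k - 2}" for i
    proof -
      have "count C (i + 2) = b (i + 1) + 1" "count C (i + 1) = b i + 1"
        using that assms(3) mid[of i] mid[of "Suc i"] by auto
      then show ?thesis
        using choose_add_swap[of "b (i + 1)" "b i + 1"] by (simp add: h_def add_ac)
    qed
    then show ?thesis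
      using prod_shift_two[OF assms(3), where m = q and f = h] by simp
  qed
  moreover have "(\<Prod>v\<in>{Suc q..Suc k}. h v) = h (Suc q) * (\<Prod>v\<in>{Suc (Suc q)..k}. h v) * h (Suc k)"
    using assms(2) by (simp add: prod.cl_ivl_Suc prod.atLeast_Suc_atMost)
  ultimately show ?thesis
    using card_slow_arrangements_interval[OF assms(1)] by (simp add: h_def)
qed

lemma card_slow_arrangements_truncated_levels:
  fixes b :: "nat \<Rightarrow> nat"
  assumes "set_mset C \<subseteq> {..Suc k}" "q < k" "2 \<le> k"
    and low: "\<And>v. v \<le> q \<Longrightarrow> count C v = 0"
    and mid: "\<And>i. q \<le> i \<Longrightarrow> i < k \<Longrightarrow> count C (Suc i) = b i + 1"
    and top: "count C (Suc k) = b k"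
  shows "card (slow_arrangements C (Suc k)) =
    (b (k - 1) + b k choose (b (k - 1) + 1)) *
    (\<Prod>i\<in>{q..k - 2}. b i + b (i + 1) + 1 choose (b i + 1))"
proof (cases "b k = 0")
  case True
  have "k \<in># C"
    using mid[of "k - 1"] assms(2) count_greater_zero_iff[of C k] by simp
  moreover have "set_mset C \<subseteq> {..<Suc k}"
  proof
    fix v assume "v \<in># C"
    moreover have "Suc k \<notin># C"
      using True top by (simp add: not_in_iff)
    ultimately show "v \<in> {..<Suc k}"
      using assms(1) by (cases "v = Suc k") auto
  qed
  ultimately have "slow_arrangements C (Suc k) = {}"
    by (intro slow_arrangements_eq_empty) auto
  with True show ?thesis
    by simp
next
  case False
  have "v \<in># C \<longleftrightarrow> v \<in> {Suc q..Suc k}" for v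
  proof (cases "v \<le> q")
    case True
    then show ?thesis
      using low[of v] by (auto simp flip: count_greater_zero_iff)
  next
    case False
    then obtain i where "v = Suc i" "q \<le> i"
      by (metis Suc_pred' gr_zeroI le_zero_eq not_less_eq_eq)
    then show ?thesis
      using assms(1) mid[of i] top \<open>b k \<noteq> 0\<close>
      by (cases "i < k"; cases "i = k") (auto simp flip: count_greater_zero_iff)
  qed
  then have "set_mset C = {Suc q..Suc k}"
    by blast
  then show ?thesis
    using assms(2,3) mid top by (rule card_slow_arrangements_top_levels)
qed

text \<open>The hypothesis \<open>2 \<le> k\<close> keeps \<open>k - 2\<close> from truncating.\<close>
lemma card_slow_arrangements_levels:
  fixes b :: "nat \<Rightarrow> nat"
  assumes "set_mset C \<subseteq> {..Suc L}" "q < k" "2 \<le> k" "k \<le> L"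
    and low: "\<And>v. v \<le> q \<Longrightarrow> count C v = 0"
    and mid: "\<And>i. q \<le> i \<Longrightarrow> i < k \<Longrightarrow> count C (Suc i) = b i + 1"
    and high: "\<And>i. k \<le> i \<Longrightarrow> i \<le> L \<Longrightarrow> count C (Suc i) = b i"
  shows "card (slow_arrangements C (Suc k)) =
    (b (k - 1) + b k choose (b (k - 1) + 1)) *
    (\<Prod>i\<in>{q..k - 2}. b i + b (i + 1) + 1 choose (b i + 1)) *
    (\<Prod>i\<in>{k..L - 1}. b i + b (i + 1) choose b i)"
proof -
  define C' where "C' = filter_mset (\<lambda>v. v \<le> Suc k) C"
  have "card (slow_arrangements C (Suc k)) =
      (\<Prod>v\<in>{Suc (Suc k)..Suc L}. count C v + count C (v - 1) choose count C v) *
      card (slow_arrangements C' (Suc k))"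
    unfolding C'_def using assms(1,4) by (intro card_slow_arrangements_peel) auto
  also have "(\<Prod>v\<in>{Suc (Suc k)..Suc L}. count C v + count C (v - 1) choose count C v) =
      (\<Prod>i\<in>{k..L - 1}. b i + b (i + 1) choose b i)"
  proof -
    have "count C (i + 2) + count C (i + 2 - 1) choose count C (i + 2) = b i + b (i + 1) choose b i"
      if "i \<in> {k..L - 1}" for i
    proof -
      have "k \<le> i" "Suc i \<le> L"
        using that assms(3,4) by auto
      then show ?thesis
        using high[of i] high[of "Suc i"] choose_add_swap[of "b (i + 1)" "b i"]
        by (simp add: add.commute)
    qed
    moreover have "(\<Prod>v\<in>{Suc (Suc k)..Suc L}. count C v + count C (v - 1) choose count C v) =
        (\<Prod>i\<in>{k..Suc L - 2}. count C (i + 2) + count C (i + 2 - 1) choose count C (i + 2))"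
      using assms(3,4) by (intro prod_shift_two) simp
    ultimately show ?thesis
      by simp
  qed
  also have "card (slow_arrangements C' (Suc k)) =
      (b (k - 1) + b k choose (b (k - 1) + 1)) *
      (\<Prod>i\<in>{q..k - 2}. b i + b (i + 1) + 1 choose (b i + 1))"
    using assms(2,3,4) low mid high[of k]
    by (intro card_slow_arrangements_truncated_levels) (auto simp: C'_def)
  finally show ?thesis
    by (simp add: ac_simps)
qed

section \<open>The diagonal sequence\<close>

lemma diag_eq_card: "diag \<alpha> k = card {j. j < length \<alpha> \<and> j < k \<and> k \<le> \<alpha> ! j + j}"
proof -
  have "{i. 1 \<le> i \<and> i \<le> k \<and> k \<le> part \<alpha> i + i - 1} =
      Suc ` {j. j < length \<alpha> \<and> j < k \<and> k \<le> \<alpha> ! j + j}"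
    by (auto simp: Defs.part_def image_iff gr0_conv_Suc Suc_le_eq split: if_splits)
  then show ?thesis
    unfolding Defs.diag_def by (simp add: card_image)
qed

lemma diag_add_length_diff:
  "diag \<alpha> k + (length \<alpha> - k) = card {j. j < length \<alpha> \<and> k \<le> \<alpha> ! j + j}"
proof -
  have "{j. j < length \<alpha> \<and> k \<le> \<alpha> ! j + j} =
      {j. j < length \<alpha> \<and> j < k \<and> k \<le> \<alpha> ! j + j} \<union> {k..<length \<alpha>}"
    by auto
  moreover have "card ({j. j < length \<alpha> \<and> j < k \<and> k \<le> \<alpha> ! j + j} \<union> {k..<length \<alpha>}) =
      card {j. j < length \<alpha> \<and> j < k \<and> k \<le> \<alpha> ! j + j} + card {k..<length \<alpha>}"
    by (rule card_Un_disjoint) auto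
  ultimately show ?thesis
    unfolding diag_eq_card by simp
qed

lemma diag_le: "diag \<alpha> k \<le> k"
  unfolding diag_eq_card by (rule order.trans[OF card_mono[of "{..<k}"]]) auto

lemma diag_le_length: "diag \<alpha> k \<le> length \<alpha>"
  unfolding diag_eq_card by (rule order.trans[OF card_mono[of "{..<length \<alpha>}"]]) auto

lemma diag_Suc_le: "diag \<alpha> (Suc k) \<le> Suc (diag \<alpha> k)"
proof -
  have "card {j. j < length \<alpha> \<and> j < Suc k \<and> Suc k \<le> \<alpha> ! j + j} \<le>
      card (insert k {j. j < length \<alpha> \<and> j < k \<and> k \<le> \<alpha> ! j + j})"
    by (rule card_mono) auto
  also have "\<dots> \<le> Suc (card {j. j < length \<alpha> \<and> j < k \<and> k \<le> \<alpha> ! j + j})"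
    by (rule card_insert_le_m1) auto
  finally show ?thesis
    unfolding diag_eq_card .
qed

lemma sum_list_eq_sum_diag:
  assumes "\<forall>j<length \<alpha>. \<alpha> ! j + j < N"
  shows "sum_list \<alpha> = (\<Sum>k<N. diag \<alpha> k)"
proof -
  have "(\<Sum>k<N. diag \<alpha> k) = (\<Sum>k<N. \<Sum>j<length \<alpha>. of_bool (j < k \<and> k \<le> \<alpha> ! j + j))"
    unfolding diag_eq_card by (simp add: sum_of_bool_eq Int_def conj_commute)
  also have "\<dots> = (\<Sum>j<length \<alpha>. \<Sum>k<N. of_bool (j < k \<and> k \<le> \<alpha> ! j + j))"
    by (rule sum.swap)
  also have "\<dots> = (\<Sum>j<length \<alpha>. \<alpha> ! j)"
  proof (rule sum.cong)
    fix j assume "j \<in> {..<length \<alpha>}"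
    then have "{..<N} \<inter> {k. j < k \<and> k \<le> \<alpha> ! j + j} = {j<..\<alpha> ! j + j}"
      using assms by auto
    then show "(\<Sum>k<N. of_bool (j < k \<and> k \<le> \<alpha> ! j + j)) = \<alpha> ! j"
      by (simp add: sum_of_bool_eq Int_def)
  qed simp
  finally show ?thesis
    by (simp add: sum_list_sum_nth atLeast0LessThan)
qed

lemma nth_add_index_less_sum_list:
  fixes xs :: "nat list"
  assumes "j < length xs"
  shows "xs ! j + j < sum_list xs + length xs"
  using member_le_sum_list[OF nth_mem[OF assms]] assms by simp

lemma sum_list_eq_if_diag_eq:
  assumes "diag \<alpha> = diag \<beta>"
  shows "sum_list \<alpha> = sum_list \<beta>"
proof -
  define N where "N = sum_list \<alpha> + length \<alpha> + (sum_list \<beta> + length \<beta>)"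
  have "\<forall>j<length \<alpha>. \<alpha> ! j + j < N" "\<forall>j<length \<beta>. \<beta> ! j + j < N"
    using nth_add_index_less_sum_list[of _ \<alpha>] nth_add_index_less_sum_list[of _ \<beta>]
    unfolding N_def by (auto intro: trans_less_add1 trans_less_add2)
  then show ?thesis
    using sum_list_eq_sum_diag[of \<alpha> N] sum_list_eq_sum_diag[of \<beta> N] assms by simp
qed

lemma diag_eq_0:
  assumes "sum_list \<alpha> + length \<alpha> \<le> k"
  shows "diag \<alpha> k = 0"
  using nth_add_index_less_sum_list[of _ \<alpha>] assms unfolding diag_eq_card
  by (fastforce simp: card_eq_0_iff)

lemma finite_diag_support: "finite {i. 0 < diag \<alpha> i}"
proof (rule finite_subset)
  show "{i. 0 < diag \<alpha> i} \<subseteq> {..<sum_list \<alpha> + length \<alpha>}"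
  proof
    fix i assume "i \<in> {i. 0 < diag \<alpha> i}"
    then show "i \<in> {..<sum_list \<alpha> + length \<alpha>}"
      using diag_eq_0[of \<alpha> i] by (cases "sum_list \<alpha> + length \<alpha> \<le> i") auto
  qed
qed simp

lemma diag_eq_0_if_Max_support_less:
  assumes "Max {i. 0 < diag \<alpha> i} < i"
  shows "diag \<alpha> i = 0"
  using Max_ge[OF finite_diag_support, of i \<alpha>] assms by (cases "diag \<alpha> i") auto

lemma finite_range_diag: "finite (range (diag \<alpha>))"
  by (rule finite_subset[of _ "{..length \<alpha>}"]) (auto simp: diag_le_length)

lemma nat_intermed_value_up:
  fixes f :: "nat \<Rightarrow> nat"
  assumes "\<And>i. j \<le> i \<Longrightarrow> i < m \<Longrightarrow> f (Suc i) \<le> Suc (f i)" "f j \<le> v" "v \<le> f m" "j \<le> m"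
  shows "\<exists>i. j \<le> i \<and> i \<le> m \<and> f i = v"
  using assms
proof (induction m)
  case (Suc m)
  show ?case
  proof (cases "f (Suc m) = v")
    case False
    with Suc.prems have "j \<le> m"
      by (metis le_SucE order.antisym)
    with Suc.prems False have "v \<le> f m"
      by (metis le_Suc_eq lessI not_less_eq_eq order.trans)
    with Suc.IH Suc.prems \<open>j \<le> m\<close> show ?thesis
      by (metis le_SucI less_SucI)
  qed (use Suc.prems in auto)
qed auto

lemma nth_add_index_gt_if_avoided:
  assumes "\<alpha> \<in> partitions n" "k < length \<alpha>" "\<forall>i<length \<alpha>. \<alpha> ! i + i \<noteq> k" "j \<le> k"
  shows "k < \<alpha> ! j + j"
proof (rule ccontr)
  assume "\<not> k < \<alpha> ! j + j"
  have sorted: "sorted_wrt (\<ge>) \<alpha>" and pos: "0 \<notin> set \<alpha>"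
    using assms(1) by (auto simp: Defs.partitions_def)
  define f where "f i = \<alpha> ! i + i" for i
  define m where "m = length \<alpha> - 1"
  have step: "f (Suc i) \<le> Suc (f i)" if "j \<le> i" "i < m" for i
    using sorted_wrt_nth_less[OF sorted, of i "Suc i"] that unfolding f_def m_def by simp
  have "m < length \<alpha>"
    using assms(2) unfolding m_def by simp
  then have "\<alpha> ! m \<in> set \<alpha>"
    by (rule nth_mem)
  with pos have "\<alpha> ! m \<noteq> 0"
    by metis
  then have "k \<le> f m"
    using assms(2) unfolding f_def m_def by simp
  moreover have "f j \<le> k" "j \<le> m"
    using \<open>\<not> k < \<alpha> ! j + j\<close> assms(2,4) unfolding f_def m_def by auto
  ultimately obtain i where "i \<le> m" "f i = k"
    using nat_intermed_value_up[of j m f k] step by blast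
  with \<open>m < length \<alpha>\<close> assms(3) show False
    unfolding f_def by auto
qed

text \<open>A rise at \<open>k\<close> means that no row \<open>j\<close> (counted from 0) has \<open>\<alpha> ! j + j = k\<close>; as
  \<open>\<alpha> ! j + j\<close> grows by at most one from row to row, every row \<open>j \<le> k\<close> then reaches
  beyond \<open>k\<close>.\<close>
lemma diag_Suc_eq_Suc_if_less:
  assumes "\<alpha> \<in> partitions n" "diag \<alpha> k < diag \<alpha> (Suc k)"
  shows "diag \<alpha> (Suc k) = Suc k"
proof -
  define A where "A x = {j. j < length \<alpha> \<and> x \<le> \<alpha> ! j + j}" for x
  have "A (Suc k) \<subseteq> A k" "finite (A k)"
    unfolding A_def by auto
  then have "card (A (Suc k)) \<le> card (A k)"
    by (simp add: card_mono)
  moreover have "diag \<alpha> k + (length \<alpha> - k) = card (A k)"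
    "diag \<alpha> (Suc k) + (length \<alpha> - Suc k) = card (A (Suc k))"
    unfolding A_def by (rule diag_add_length_diff)+
  ultimately have "k < length \<alpha>" "card (A (Suc k)) = card (A k)"
    using assms(2) by linarith+
  with \<open>A (Suc k) \<subseteq> A k\<close> \<open>finite (A k)\<close> have "A (Suc k) = A k"
    by (simp add: card_subset_eq)
  then have "\<forall>j<length \<alpha>. \<alpha> ! j + j \<noteq> k"
    unfolding A_def by (metis (mono_tags, lifting) mem_Collect_eq not_less_eq_eq order_refl)
  then have "k < \<alpha> ! j + j" if "j \<le> k" for j
    using nth_add_index_gt_if_avoided[OF assms(1) \<open>k < length \<alpha>\<close>] that by blast
  then have "{j. j < length \<alpha> \<and> j < Suc k \<and> Suc k \<le> \<alpha> ! j + j} = {..<Suc k}"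
    using \<open>k < length \<alpha>\<close> by (auto simp: Suc_le_eq less_Suc_eq_le)
  then show ?thesis
    unfolding diag_eq_card by simp
qed

lemma diag_one:
  assumes "\<alpha> \<in> partitions n" "0 < n"
  shows "diag \<alpha> 1 = 1"
proof -
  have "\<alpha> \<noteq> []" "0 \<notin> set \<alpha>"
    using assms by (auto simp: Defs.partitions_def)
  then have "\<alpha> ! 0 \<noteq> 0"
    by (metis length_greater_0_conv nth_mem)
  with \<open>\<alpha> \<noteq> []\<close> have "{j. j < length \<alpha> \<and> j < 1 \<and> 1 \<le> \<alpha> ! j + j} = {0}"
    by auto
  then show ?thesis
    unfolding diag_eq_card by simp
qed

lemma diag_Suc_le_if_Max_le:
  assumes "\<alpha> \<in> partitions n" "Max (range (diag \<alpha>)) \<le> x"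
  shows "diag \<alpha> (Suc x) \<le> diag \<alpha> x"
proof (rule ccontr)
  assume "\<not> diag \<alpha> (Suc x) \<le> diag \<alpha> x"
  then have "diag \<alpha> (Suc x) = Suc x"
    using diag_Suc_eq_Suc_if_less[OF assms(1)] by simp
  moreover have "diag \<alpha> (Suc x) \<le> Max (range (diag \<alpha>))"
    using finite_range_diag by simp
  ultimately show False
    using assms(2) by simp
qed

text \<open>Once the diagonal sequence falls below the identity it can never climb back, since
  a rise always lands on the identity.\<close>
lemma diag_eq_self_if_le_Max:
  assumes "\<alpha> \<in> partitions n" "v \<le> Max (range (diag \<alpha>))"
  shows "diag \<alpha> v = v"
proof (rule ccontr)
  assume "diag \<alpha> v \<noteq> v"
  then have "diag \<alpha> v < v"
    using diag_le[of \<alpha> v] by simp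
  have stays_below: "diag \<alpha> (v + t) \<le> diag \<alpha> v" for t
  proof (induction t)
    case (Suc t)
    show ?case
    proof (rule ccontr)
      assume "\<not> diag \<alpha> (v + Suc t) \<le> diag \<alpha> v"
      with Suc.IH have "diag \<alpha> (Suc (v + t)) = Suc (v + t)"
        using diag_Suc_eq_Suc_if_less[OF assms(1), of "v + t"] by simp
      with Suc.IH diag_Suc_le[of \<alpha> "v + t"] \<open>diag \<alpha> v < v\<close> show False
        by simp
    qed
  qed simp
  have "diag \<alpha> x < v" for x
  proof (cases "x < v")
    case True
    then show ?thesis
      using diag_le[of \<alpha> x] by simp
  next
    case False
    then show ?thesis
      using stays_below[of "x - v"] \<open>diag \<alpha> v < v\<close> by simp
  qed
  moreover have "Max (range (diag \<alpha>)) \<in> range (diag \<alpha>)"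
    using finite_range_diag by (rule Max_in) simp
  ultimately show False
    using assms(2) by (auto simp: not_less[symmetric])
qed

section \<open>Multisets of naturals determined by their tails\<close>

lemma size_filter_greater_eq_count_Suc_plus:
  fixes A :: "nat multiset"
  shows "size (filter_mset ((<) x) A) = count A (Suc x) + size (filter_mset ((<) (Suc x)) A)"
proof -
  have "filter_mset ((<) x) A = {#v \<in># A. v = Suc x#} + filter_mset ((<) (Suc x)) A"
    by (rule multiset_eqI) auto
  then show ?thesis
    by (simp add: filter_eq_replicate_mset)
qed

lemma multiset_eq_if_size_filter_greater_eq:
  fixes A B :: "nat multiset"
  assumes "0 \<notin># A" "0 \<notin># B"
    and "\<And>x. size (filter_mset ((<) x) A) = size (filter_mset ((<) x) B)"
  shows "A = B"
proof (rule multiset_eqI)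
  fix v
  show "count A v = count B v"
  proof (cases v)
    case 0
    with assms(1,2) show ?thesis
      by (simp add: not_in_iff)
  next
    case (Suc x)
    with assms(3)[of x] assms(3)[of "Suc x"] show ?thesis
      by (simp add: size_filter_greater_eq_count_Suc_plus[of x])
  qed
qed

lemma filter_mset_replicate_mset:
  "filter_mset P (replicate_mset n a) = (if P a then replicate_mset n a else {#})"
  by (induction n) auto

lemma ex_mset_size_filter_greater:
  fixes g :: "nat \<Rightarrow> nat"
  assumes "\<And>x. g (Suc x) \<le> g x" "g N = 0"
  shows "\<exists>C. set_mset C \<subseteq> {1..N} \<and> (\<forall>x. size (filter_mset ((<) x) C) = g x)"
  using assms
proof (induction N arbitrary: g)
  case 0
  then have "g x = 0" for x
    using lift_Suc_antimono_le[of g 0 x] by simp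
  then show ?case
    by auto
next
  case (Suc N)
  have antimono: "g y \<le> g x" if "x \<le> y" for x y
    using lift_Suc_antimono_le[of g, OF Suc.prems(1) that] .
  obtain C where C: "set_mset C \<subseteq> {1..N}" "\<And>x. size (filter_mset ((<) x) C) = g x - g N"
    using Suc.IH[of "\<lambda>x. g x - g N"] Suc.prems(1) by (auto intro: diff_le_mono)
  define C' where "C' = C + replicate_mset (g N) (Suc N)"
  have "size (filter_mset ((<) x) C') = g x" for x
  proof (cases "x \<le> N")
    case True
    with antimono[of x N] C(2)[of x] show ?thesis
      unfolding C'_def by (simp add: filter_mset_replicate_mset)
  next
    case False
    with antimono[of "Suc N" x] Suc.prems(2) have "g x = 0"
      by simp
    with False C(2)[of x] show ?thesis
      unfolding C'_def by (simp add: filter_mset_replicate_mset)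
  qed
  moreover have "set_mset C' \<subseteq> {1..Suc N}"
    using C(1) unfolding C'_def by auto
  ultimately show ?case
    by blast
qed

section \<open>Partitions as slow arrangements\<close>

definition shifted_parts :: "nat list \<Rightarrow> nat list" where
  "shifted_parts \<alpha> = map (\<lambda>j. \<alpha> ! j + Suc j) [0..<length \<alpha>]"

lemma length_shifted_parts [simp]: "length (shifted_parts \<alpha>) = length \<alpha>"
  by (simp add: shifted_parts_def)

lemma nth_shifted_parts [simp]: "j < length \<alpha> \<Longrightarrow> shifted_parts \<alpha> ! j = \<alpha> ! j + Suc j"
  by (simp add: shifted_parts_def)

lemma inj_shifted_parts: "inj shifted_parts"
proof (rule injI)
  fix \<alpha> \<beta> assume eq: "shifted_parts \<alpha> = shifted_parts \<beta>"
  then have "length \<alpha> = length \<beta>"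
    by (metis length_shifted_parts)
  show "\<alpha> = \<beta>"
  proof (rule nth_equalityI)
    fix j assume "j < length \<alpha>"
    with \<open>length \<alpha> = length \<beta>\<close> eq show "\<alpha> ! j = \<beta> ! j"
      by (metis add_right_cancel nth_shifted_parts)
  qed fact
qed

lemma range_shifted_parts: "xs \<in> range shifted_parts \<longleftrightarrow> (\<forall>j<length xs. Suc j \<le> xs ! j)"
proof
  assume "\<forall>j<length xs. Suc j \<le> xs ! j"
  then have "xs = shifted_parts (map (\<lambda>j. xs ! j - Suc j) [0..<length xs])"
    by (intro nth_equalityI) auto
  then show "xs \<in> range shifted_parts"
    by blast
qed auto

lemma slow_rise_shifted_parts_iff: "slow_rise (shifted_parts \<alpha>) \<longleftrightarrow> sorted_wrt (\<ge>) \<alpha>"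
  by (simp add: successively_conv_nth sorted_wrt_iff_nth_Suc_transp)

lemma last_shifted_parts:
  assumes "\<alpha> \<noteq> []"
  shows "last (shifted_parts \<alpha>) = last \<alpha> + length \<alpha>"
proof -
  have "shifted_parts \<alpha> \<noteq> []"
    using assms by (metis length_0_conv length_shifted_parts)
  with assms show ?thesis
    by (simp add: last_conv_nth)
qed

lemma size_filter_greater_shifted_parts:
  "size (filter_mset ((<) x) (mset (shifted_parts \<alpha>))) = diag \<alpha> x + (length \<alpha> - x)"
proof -
  have "size (filter_mset ((<) x) (mset (shifted_parts \<alpha>))) =
      card {j. j < length \<alpha> \<and> x < shifted_parts \<alpha> ! j}"
    by (metis length_filter_conv_card length_shifted_parts mset_filter size_mset)
  also have "{j. j < length \<alpha> \<and> x < shifted_parts \<alpha> ! j} = {j. j < length \<alpha> \<and> x \<le> \<alpha> ! j + j}"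
    by auto
  finally show ?thesis
    by (simp add: diag_add_length_diff)
qed

lemma slow_rise_last_le:
  assumes "slow_rise xs" "j < length xs"
  shows "last xs \<le> xs ! j + (length xs - Suc j)"
  using assms
proof (induction xs rule: rev_induct)
  case (snoc x xs)
  show ?case
  proof (cases "j < length xs")
    case True
    with snoc have "last xs \<le> xs ! j + (length xs - Suc j)" "x \<le> Suc (last xs)"
      by (auto simp: successively_append_iff)
    with True show ?thesis
      by (simp add: nth_append)
  qed (use snoc.prems in \<open>simp add: nth_append\<close>)
qed simp

lemma last_le_if_sorted_ge:
  fixes xs :: "nat list"
  assumes "sorted_wrt (\<ge>) xs" "x \<in> set xs"
  shows "last xs \<le> x"
  using assms by (induction xs rule: rev_induct) (auto simp: sorted_wrt_append)

lemma mset_shifted_parts_eq_iff: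
  assumes "0 \<notin># C" and tails: "\<And>x. size (filter_mset ((<) x) C) = diag \<beta> x + (k - x)"
  shows "mset (shifted_parts \<alpha>) = C \<longleftrightarrow> diag \<alpha> = diag \<beta> \<and> length \<alpha> = k"
proof
  assume "mset (shifted_parts \<alpha>) = C"
  then have same_tails: "diag \<alpha> x + (length \<alpha> - x) = diag \<beta> x + (k - x)" for x
    using size_filter_greater_shifted_parts[of x \<alpha>] tails[of x] by simp
  moreover from same_tails[of 0] have "length \<alpha> = k"
    using diag_le[of \<alpha> 0] diag_le[of \<beta> 0] by simp
  ultimately show "diag \<alpha> = diag \<beta> \<and> length \<alpha> = k"
    by auto
next
  assume "diag \<alpha> = diag \<beta> \<and> length \<alpha> = k"
  moreover have "0 \<notin># mset (shifted_parts \<alpha>)"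
    by (auto simp: in_set_conv_nth)
  ultimately show "mset (shifted_parts \<alpha>) = C"
    using assms
    by (intro multiset_eq_if_size_filter_greater_eq) (auto simp: size_filter_greater_shifted_parts)
qed

lemma zero_notin_iff_last_shifted_parts:
  assumes "sorted_wrt (\<ge>) \<alpha>"
  shows "0 \<notin> set \<alpha> \<longleftrightarrow>
    (shifted_parts \<alpha> \<noteq> [] \<longrightarrow> Suc (length \<alpha>) \<le> last (shifted_parts \<alpha>))"
proof (cases "\<alpha> = []")
  case False
  then have "0 \<notin> set \<alpha> \<longleftrightarrow> last \<alpha> \<noteq> 0"
    using last_le_if_sorted_ge[OF assms] by (metis last_in_set le_zero_eq)
  moreover have "shifted_parts \<alpha> \<noteq> []"
    using False by (metis length_0_conv length_shifted_parts)
  ultimately show ?thesis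
    using False by (auto simp: last_shifted_parts)
qed (simp add: shifted_parts_def)

lemma shifted_parts_in_slow_arrangements_iff:
  assumes "\<alpha>\<^sub>0 \<in> partitions n" "0 \<notin># C"
    and "\<And>x. size (filter_mset ((<) x) C) = diag \<alpha>\<^sub>0 x + (k - x)"
  shows "shifted_parts \<alpha> \<in> slow_arrangements C (Suc k) \<longleftrightarrow>
    \<alpha> \<in> diag_class n (diag \<alpha>\<^sub>0) \<inter> partitions_k n k"
proof -
  have "sum_list \<alpha>\<^sub>0 = n"
    using assms(1) by (simp add: Defs.partitions_def)
  then have "sum_list \<alpha> = n" if "diag \<alpha> = diag \<alpha>\<^sub>0"
    using sum_list_eq_if_diag_eq[OF that] by simp
  then show ?thesis
    using mset_shifted_parts_eq_iff[OF assms(2,3), of \<alpha>] zero_notin_iff_last_shifted_parts[of \<alpha>]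
      slow_rise_shifted_parts_iff[of \<alpha>]
    unfolding slow_arrangements_def permutations_of_multiset_def Defs.diag_class_def
      Defs.partitions_k_def Defs.partitions_def
    by auto
qed

lemma card_diag_class_inter_partitions_k:
  assumes "\<alpha>\<^sub>0 \<in> partitions n" "0 \<notin># C"
    and tails: "\<And>x. size (filter_mset ((<) x) C) = diag \<alpha>\<^sub>0 x + (k - x)"
  shows "card (diag_class n (diag \<alpha>\<^sub>0) \<inter> partitions_k n k) = card (slow_arrangements C (Suc k))"
proof -
  have "slow_arrangements C (Suc k) \<subseteq> range shifted_parts"
  proof
    fix xs assume xs: "xs \<in> slow_arrangements C (Suc k)"
    then have "mset xs = C" "slow_rise xs" "xs \<noteq> [] \<longrightarrow> Suc k \<le> last xs"
      by (auto simp: slow_arrangements_def permutations_of_multiset_def)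
    moreover have "size C = k"
      using tails[of 0] assms(2) diag_le[of \<alpha>\<^sub>0 0]
      by (metis (no_types) add_0 diff_zero filter_mset_cong filter_mset_True gr0I le_zero_eq)
    ultimately have "Suc j \<le> xs ! j" if "j < length xs" for j
      using slow_rise_last_le[of xs j] that by fastforce
    then show "xs \<in> range shifted_parts"
      by (simp add: range_shifted_parts)
  qed
  then have "slow_arrangements C (Suc k) = shifted_parts ` (diag_class n (diag \<alpha>\<^sub>0) \<inter> partitions_k n k)"
    using shifted_parts_in_slow_arrangements_iff[OF assms] by blast
  then show ?thesis
    using inj_shifted_parts by (simp add: card_image inj_on_subset)
qed

text \<open>The multiset \<open>C\<close> is the common multiset of shifted parts of the members of
  \<open>[d]\<^sub>k\<close>.\<close>
lemma ex_mset_levels_of_diag: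
  assumes "\<alpha> \<in> partitions n" "q = Max (range (diag \<alpha>))" "L = Max {i. 0 < diag \<alpha> i}"
    and "q < k" "k \<le> L"
  obtains C where "0 \<notin># C" "set_mset C \<subseteq> {..Suc L}"
    and "\<And>x. size (filter_mset ((<) x) C) = diag \<alpha> x + (k - x)"
    and "\<And>v. v \<le> q \<Longrightarrow> count C v = 0"
    and "\<And>i. q \<le> i \<Longrightarrow> i < k \<Longrightarrow> count C (Suc i) = diag \<alpha> i - diag \<alpha> (Suc i) + 1"
    and "\<And>i. k \<le> i \<Longrightarrow> count C (Suc i) = diag \<alpha> i - diag \<alpha> (Suc i)"
proof -
  define g where "g x = diag \<alpha> x + (k - x)" for x
  have "g (Suc x) \<le> g x" for x
  proof (cases "x < k")
    case True
    then show ?thesis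
      using diag_Suc_le[of \<alpha> x] unfolding g_def by simp
  next
    case False
    then show ?thesis
      using diag_Suc_le_if_Max_le[OF assms(1), of x] assms(2,4) unfolding g_def by simp
  qed
  moreover have "g (Suc L) = 0"
    using diag_eq_0_if_Max_support_less[of \<alpha> "Suc L"] assms(3,5) unfolding g_def by simp
  ultimately obtain C where C: "set_mset C \<subseteq> {1..Suc L}"
      and tails: "\<And>x. size (filter_mset ((<) x) C) = g x"
    using ex_mset_size_filter_greater by blast
  have count: "count C (Suc x) = g x - g (Suc x)" for x
    using size_filter_greater_eq_count_Suc_plus[of x C] tails[of x] tails[of "Suc x"] by simp
  show ?thesis
  proof
    show "0 \<notin># C" "set_mset C \<subseteq> {..Suc L}"
      using C by auto
    show "size (filter_mset ((<) x) C) = diag \<alpha> x + (k - x)" for x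
      using tails unfolding g_def .
    show "count C v = 0" if "v \<le> q" for v
    proof (cases v)
      case 0
      with C show ?thesis
        by (auto simp: not_in_iff[symmetric])
    next
      case (Suc u)
      with that assms(4) show ?thesis
        using diag_eq_self_if_le_Max[OF assms(1), of u] diag_eq_self_if_le_Max[OF assms(1), of v]
          assms(2) count[of u] unfolding g_def by simp
    qed
    show "count C (Suc i) = diag \<alpha> i - diag \<alpha> (Suc i) + 1" if "q \<le> i" "i < k" for i
      using diag_Suc_le_if_Max_le[OF assms(1), of i] assms(2) that count[of i] unfolding g_def
      by simp
    show "count C (Suc i) = diag \<alpha> i - diag \<alpha> (Suc i)" if "k \<le> i" for i
      using that count[of i] unfolding g_def by simp
  qed
qed

theorem proposition4p5:
  fixes n :: nat and d :: "nat \<Rightarrow> nat" and L q k :: nat and b :: "nat \<Rightarrow> nat"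
  assumes "n > 0"
    and "d \<in> Delta n"
    and "L = Max {i. d i > 0}"
    and "q = Max (range d)"
    and "b = (\<lambda>i. if i = L then d L else d i - d (i + 1))"
    and "q < k" and "k \<le> L"
  shows "card (diag_class n d \<inter> partitions_k n k) =
           ((b (k - 1) + b k) choose (b (k - 1) + 1))
         * (\<Prod>i\<in>{q..k - 2}. (b i + b (i + 1) + 1) choose (b i + 1))
         * (\<Prod>i\<in>{k..L - 1}. (b i + b (i + 1)) choose (b i))"
proof -
  obtain \<alpha> where \<alpha>: "\<alpha> \<in> partitions n" and d: "d = diag \<alpha>"
    using assms(2) unfolding Defs.Delta_def by auto
  have "d (Suc L) = 0"
    using diag_eq_0_if_Max_support_less[of \<alpha> "Suc L"] assms(3) d by simp
  then have b: "b i = d i - d (Suc i)" for i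
    using assms(5) by simp
  have "1 \<le> q"
    using diag_one[OF \<alpha> assms(1)] finite_range_diag[of \<alpha>] assms(4) d
    by (metis Max_ge rangeI)
  obtain C where "0 \<notin># C" and C: "set_mset C \<subseteq> {..Suc L}"
    and tails: "\<And>x. size (filter_mset ((<) x) C) = d x + (k - x)"
    and low: "\<And>v. v \<le> q \<Longrightarrow> count C v = 0"
    and mid: "\<And>i. q \<le> i \<Longrightarrow> i < k \<Longrightarrow> count C (Suc i) = b i + 1"
    and high: "\<And>i. k \<le> i \<Longrightarrow> count C (Suc i) = b i"
    using ex_mset_levels_of_diag[OF \<alpha>, of q L k] assms(3,4,6,7) unfolding d b by blast
  have "card (diag_class n d \<inter> partitions_k n k) = card (slow_arrangements C (Suc k))"
    unfolding d by (rule card_diag_class_inter_partitions_k) (use \<alpha> d \<open>0 \<notin># C\<close> tails in auto)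
  also have "\<dots> = ((b (k - 1) + b k) choose (b (k - 1) + 1))
      * (\<Prod>i\<in>{q..k - 2}. (b i + b (i + 1) + 1) choose (b i + 1))
      * (\<Prod>i\<in>{k..L - 1}. (b i + b (i + 1)) choose (b i))"
    using C \<open>1 \<le> q\<close> assms(6,7) low mid high by (intro card_slow_arrangements_levels) auto
  finally show ?thesis .
qed

end
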